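(* With $Y^+$ as in the context, $$m(Y^+)=(-1)^{\frac{p-1}{2}}\cdot\frac{p-1}{2},\qquad \#\mathrm{BF}(Y^+)_{\rm tors}=p,\qquad g_{Y^+}^*(1)=(-1)^{\frac{p-1}{2}}\cdot\frac{p-1}{2}\cdot p.$$
   Context: Let $p$ be an odd prime, $\Delta=\mathrm{Gal}(\mathbb{Q}(\zeta_p)/\mathbb{Q})$, $\sigma_i:\zeta_p\mapsto\zeta_p^i$, $j=\sigma_{-1}$. Digraphs have incidence $e\mapsto(o(e),t(e))$; the derived digraph $X(G,\alpha)$ of $\alpha:E_X\to G$ has vertices $V_X\times G$, edges $E_X\times G$, $o(e,\sigma)=(o(e),\sigma)$, $t(e,\sigma)=(t(e),\sigma\alpha(e))$, with $G$ acting by left multiplication on the second coordinate. $X$ is the bouquet with $\frac{p-1}{2}p+1$ loops $e_0$, $e_{i,k}$ ($1\le k\le i\le p-1$), $\alpha(e_0)=\sigma_1$, $\alpha(e_{i,k})=\sigma_i^{-1}$, $Y=X(\Delta,\alpha)$, and $Y^+=Y_{\langle j\rangle}$ the quotient digraph. For a finite digraph $W$: $\mathcal{A}_W(w)=\sum_{o(\varepsilon)=w}t(\varepsilon)$, $\mathrm{BF}(W)=\mathrm{coker}(\mathcal{I}-\mathcal{A}_W)$, $g_W(u)=\det(\mathcal{I}-\mathcal{A}_Wu)$, $r_W=\mathrm{ord}_{u=1}g_W$, $g_W^*(1)$ the coefficient of $(u-1)^{r_W}$ in the Taylor expansion at $1$, and (when $r_W=\mathrm{rank}_{\mathbb{Z}}\mathrm{BF}(W)$)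 $m(W)=g_W^*(1)/\#\mathrm{BF}(W)_{\rm tors}$, a nonzero integer. *)

theory Defs
  imports "HOL-Combinatorics.Permutations" "HOL-Computational_Algebra.Polynomial" "Graph_Theory.Digraph"
begin

text \<open>sigma_i (zeta_p to zeta_p^i) is represented by its index i in {1..p-1};
  composition sigma_a sigma_b = sigma_(a b mod p).\<close>

definition Delta :: "nat \<Rightarrow> nat set" where
  "Delta p = {1..<p}"

definition dmul :: "nat \<Rightarrow> nat \<Rightarrow> nat \<Rightarrow> nat" where
  "dmul p a b = (a * b) mod p"

definition dinv :: "nat \<Rightarrow> nat \<Rightarrow> nat" where
  "dinv p a = (THE b. b \<in> Delta p \<and> dmul p a b = 1)"

text \<open>The subgroup generated by j = sigma_(-1).\<close>
definition jgrp :: "nat \<Rightarrow> nat set" where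
  "jgrp p = {1, p - 1}"

definition derived :: "('v, 'e) pre_digraph \<Rightarrow> 'g set \<Rightarrow> ('g \<Rightarrow> 'g \<Rightarrow> 'g) \<Rightarrow> ('e \<Rightarrow> 'g)
    \<Rightarrow> ('v \<times> 'g, 'e \<times> 'g) pre_digraph" where
  "derived X G mul \<alpha> =
     \<lparr> verts = verts X \<times> G, arcs = arcs X \<times> G,
       tail = (\<lambda>(e, \<sigma>). (tail X e, \<sigma>)),
       head = (\<lambda>(e, \<sigma>). (head X e, mul \<sigma> (\<alpha> e))) \<rparr>"

definition lorbit :: "'g set \<Rightarrow> ('g \<Rightarrow> 'g \<Rightarrow> 'g) \<Rightarrow> 'a \<times> 'g \<Rightarrow> ('a \<times> 'g) set" where
  "lorbit H mul x = {(fst x, mul \<tau> (snd x)) | \<tau>. \<tau> \<in> H}"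

definition quot :: "('v \<times> 'g, 'e \<times> 'g) pre_digraph \<Rightarrow> 'g set \<Rightarrow> ('g \<Rightarrow> 'g \<Rightarrow> 'g)
    \<Rightarrow> (('v \<times> 'g) set, ('e \<times> 'g) set) pre_digraph" where
  "quot Y H mul =
     \<lparr> verts = lorbit H mul ` verts Y, arcs = lorbit H mul ` arcs Y,
       tail = (\<lambda>E. lorbit H mul (tail Y (SOME \<epsilon>. \<epsilon> \<in> E))),
       head = (\<lambda>E. lorbit H mul (head Y (SOME \<epsilon>. \<epsilon> \<in> E))) \<rparr>"

datatype xedge = E0 | Eik nat nat

definition X_edges :: "nat \<Rightarrow> xedge set" where
  "X_edges p = insert E0 {Eik i k | i k. 1 \<le> k \<and> k \<le> i \<and> i \<le> p - 1}"

definition Xb :: "nat \<Rightarrow> (unit, xedge) pre_digraph" where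
  "Xb p = \<lparr> verts = {()}, arcs = X_edges p, tail = (\<lambda>_. ()), head = (\<lambda>_. ()) \<rparr>"

definition alpha :: "nat \<Rightarrow> xedge \<Rightarrow> nat" where
  "alpha p e = (case e of E0 \<Rightarrow> 1 | Eik i k \<Rightarrow> dinv p i)"

definition Yd :: "nat \<Rightarrow> (unit \<times> nat, xedge \<times> nat) pre_digraph" where
  "Yd p = derived (Xb p) (Delta p) (dmul p) (alpha p)"

definition Yplus :: "nat \<Rightarrow> ((unit \<times> nat) set, (xedge \<times> nat) set) pre_digraph" where
  "Yplus p = quot (Yd p) (jgrp p) (dmul p)"

text \<open>Elements of Z[V] are functions V -> int vanishing outside V.\<close>
definition ZV :: "('v, 'e) pre_digraph \<Rightarrow> ('v \<Rightarrow> int) set" where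
  "ZV W = {f. \<forall>x. x \<notin> verts W \<longrightarrow> f x = 0}"

text \<open>A_W(sum_w f(w) w) = sum_w f(w) sum_(o(eps)=w) t(eps), as a function of v.\<close>
definition adj :: "('v, 'e) pre_digraph \<Rightarrow> ('v \<Rightarrow> int) \<Rightarrow> ('v \<Rightarrow> int)" where
  "adj W f = (\<lambda>v. \<Sum>\<epsilon>\<in>{\<epsilon> \<in> arcs W. head W \<epsilon> = v}. f (tail W \<epsilon>))"

definition BF_lattice :: "('v, 'e) pre_digraph \<Rightarrow> ('v \<Rightarrow> int) set" where
  "BF_lattice W = (\<lambda>f. (\<lambda>v. f v - adj W f v)) ` ZV W"

text \<open>BF(W) = coker(I - A_W) = Z[V] / (I - A_W) Z[V], as a set of cosets.\<close>
definition BF :: "('v, 'e) pre_digraph \<Rightarrow> ('v \<Rightarrow> int) set set" where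
  "BF W = ZV W // {(f, g). f \<in> ZV W \<and> g \<in> ZV W \<and> f - g \<in> BF_lattice W}"

definition BF_tors :: "('v, 'e) pre_digraph \<Rightarrow> ('v \<Rightarrow> int) set set" where
  "BF_tors W = {c \<in> BF W. \<exists>n::int. n > 0 \<and> (\<exists>f\<in>c. (\<lambda>v. n * f v) \<in> BF_lattice W)}"

definition BF_indep :: "('v, 'e) pre_digraph \<Rightarrow> ('v \<Rightarrow> int) set set \<Rightarrow> bool" where
  "BF_indep W S = (\<forall>c :: ('v \<Rightarrow> int) set \<Rightarrow> int.
      (\<lambda>v. \<Sum>s\<in>S. c s * (SOME f. f \<in> s) v) \<in> BF_lattice W \<longrightarrow> (\<forall>s\<in>S. c s = 0))"

definition BF_rank :: "('v, 'e) pre_digraph \<Rightarrow> nat" where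
  "BF_rank W = Max {card S | S. S \<subseteq> BF W \<and> finite S \<and> BF_indep W S}"

text \<open>Matrix of I - A_W u: entry (w, v) is the coefficient of v in the image of w.\<close>
definition IAu :: "('v, 'e) pre_digraph \<Rightarrow> 'v \<Rightarrow> 'v \<Rightarrow> int poly" where
  "IAu W w v = (if w = v then 1 else 0)
      - [:0, 1:] * of_nat (card {\<epsilon> \<in> arcs W. tail W \<epsilon> = w \<and> head W \<epsilon> = v})"

text \<open>g_W(u) = det(I - A_W u), Leibniz formula over the vertex set.\<close>
definition zeta_poly :: "('v, 'e) pre_digraph \<Rightarrow> int poly" where
  "zeta_poly W = (\<Sum>\<pi> \<in> {\<pi>. \<pi> permutes verts W}.
      of_int (sign \<pi>) * (\<Prod>w\<in>verts W. IAu W w (\<pi> w)))"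

definition r_ord :: "('v, 'e) pre_digraph \<Rightarrow> nat" where
  "r_ord W = order 1 (zeta_poly W)"

text \<open>Coefficient of (u-1)^r in the Taylor expansion of g_W at 1.\<close>
definition gstar :: "('v, 'e) pre_digraph \<Rightarrow> int" where
  "gstar W = coeff (pcompose (zeta_poly W) [:1, 1:]) (r_ord W)"

definition mval :: "('v, 'e) pre_digraph \<Rightarrow> rat" where
  "mval W = of_int (gstar W) / of_nat (card (BF_tors W))"

end

(*
  The quotient Y^+ has as vertices the (p-1)/2 orbits {sigma, -sigma}.  From the orbit of sigma,
  the loop e_0 leads back to it, and an edge e_(i,k) leads to the orbit of tau exactly when
  sigma / i = +-tau (mod p), i.e. when i is i0 = sigma / tau or p - i0; these carry
  i0 + (p - i0) = p edges.  So the adjacency matrix of Y^+ is I + p J.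

  For a digraph on n vertices with adjacency matrix I + q J, the Leibniz expansion gives
  det(I - A u) = (1 - u)^(n-1) (1 - u - n q u), so r = n - 1 and g*(1) = (-1)^n n q.  Since
  I - A = -q J, the image of I - A consists of the constant vectors divisible by q; hence
  BF = Z^(n-1) + Z/q, of rank n - 1 with q torsion elements.
*)

theory Submission
  imports Defs "HOL-Number_Theory.Cong"
begin

section \<open>The polynomial det(I - u (I + q J))\<close>

lemma card_le_1_iff_empty_or_singleton:
  assumes "finite U"
  shows "card U \<le> 1 \<longleftrightarrow> U = {} \<or> (\<exists>u. U = {u})"
proof
  assume "card U \<le> 1"
  then show "U = {} \<or> (\<exists>u. U = {u})"
    using assms by (metis card_0_eq card_1_singletonE le_Suc_eq One_nat_def le_zero_eq)
qed auto

lemma sum_sign_permutes: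
  assumes "finite U"
  shows "(\<Sum>\<pi> | \<pi> permutes U. sign \<pi>) = (if card U \<le> 1 then 1 else (0::int))"
proof (cases "card U \<le> 1")
  case True
  then have "U = {} \<or> (\<exists>u. U = {u})"
    using assms card_le_1_iff_empty_or_singleton by blast
  then have "{\<pi>. \<pi> permutes U} = {id}" by auto
  then show ?thesis using True by (simp add: sign_id)
next
  case False
  then obtain a b where ab: "a \<in> U" "b \<in> U" "a \<noteq> b"
    using card_le_Suc0_iff_eq[OF assms] by auto
  let ?t = "transpose a b"
  let ?P = "{\<pi>. \<pi> permutes U}"
  have t: "?t permutes U" using ab permutes_swap_id by metis
  \<comment> \<open>Composing with a transposition is a sign-reversing bijection.\<close>
  have "(\<Sum>\<pi>\<in>?P. sign \<pi>) = (\<Sum>\<pi>\<in>?P. sign (?t \<circ> \<pi>))"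
    by (rule sum.reindex_bij_witness[where i="\<lambda>\<pi>. ?t \<circ> \<pi>" and j="\<lambda>\<pi>. ?t \<circ> \<pi>"])
       (auto simp: comp_assoc[symmetric] intro: permutes_compose[OF _ t])
  also have "\<dots> = (\<Sum>\<pi>\<in>?P. - sign \<pi>)"
    using assms ab t by (intro sum.cong) (auto simp: sign_compose sign_swap_id permutes_imp_permutation)
  finally show ?thesis using False by (simp add: sum_negf)
qed

lemma permutes_fixing_complement_iff:
  assumes "U \<subseteq> V"
  shows "(\<pi> permutes V \<and> (\<forall>w\<in>V - U. \<pi> w = w)) \<longleftrightarrow> \<pi> permutes U"
  using assms permutes_subset unfolding permutes_def by blast

lemma leibniz_det_diag_plus_const:
  fixes a b :: "'a::comm_ring_1"
  assumes V: "finite V"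
  shows "(\<Sum>\<pi> | \<pi> permutes V. of_int (sign \<pi>) * (\<Prod>w\<in>V. (if \<pi> w = w then a else 0) + b))
       = a ^ card V + of_nat (card V) * a ^ (card V - 1) * b"
proof -
  let ?P = "{\<pi>. \<pi> permutes V}"
  let ?fixes = "\<lambda>\<pi> U. \<forall>w\<in>V - U. \<pi> w = w"
  let ?c = "\<lambda>U. b ^ card U * a ^ card (V - U)"
  \<comment> \<open>Expanding the product by the set U of factors taken from b, the signed sum over
    the permutations fixing V - U pointwise vanishes unless U has at most one element.\<close>
  have expand: "(\<Prod>w\<in>V. (if \<pi> w = w then a else 0) + b)
      = (\<Sum>U\<in>Pow V. if ?fixes \<pi> U then ?c U else 0)" for \<pi>
  proof -
    have "(\<Prod>w\<in>V. (if \<pi> w = w then a else 0) + b)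
        = (\<Sum>U\<in>Pow V. b ^ card U * (\<Prod>w\<in>V - U. if \<pi> w = w then a else 0))"
      using prod_add[OF V, of "\<lambda>_. b" "\<lambda>w. if \<pi> w = w then a else 0"] by (simp add: add.commute)
    also have "\<dots> = (\<Sum>U\<in>Pow V. if ?fixes \<pi> U then ?c U else 0)"
    proof (intro sum.cong refl)
      fix U
      have "\<not> ?fixes \<pi> U \<Longrightarrow> (\<Prod>w\<in>V - U. if \<pi> w = w then a else 0) = 0"
        using V by (auto intro!: prod_zero)
      then show "b ^ card U * (\<Prod>w\<in>V - U. if \<pi> w = w then a else 0) = (if ?fixes \<pi> U then ?c U else 0)"
        by auto
    qed
    finally show ?thesis .
  qed
  have "(\<Sum>\<pi>\<in>?P. of_int (sign \<pi>) * (\<Prod>w\<in>V. (if \<pi> w = w then a else 0) + b))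
      = (\<Sum>\<pi>\<in>?P. \<Sum>U\<in>Pow V. if ?fixes \<pi> U then of_int (sign \<pi>) * ?c U else 0)"
    unfolding expand sum_distrib_left by (intro sum.cong refl) simp
  also have "\<dots> = (\<Sum>U\<in>Pow V. \<Sum>\<pi>\<in>{\<pi> \<in> ?P. ?fixes \<pi> U}. of_int (sign \<pi>) * ?c U)"
    using V by (subst sum.swap) (simp add: sum.inter_filter[symmetric] finite_permutations)
  also have "\<dots> = (\<Sum>U\<in>Pow V. ?c U * of_int (\<Sum>\<pi> | \<pi> permutes V \<and> ?fixes \<pi> U. sign \<pi>))"
    by (simp add: of_int_sum sum_distrib_left mult.commute)
  also have "\<dots> = (\<Sum>U\<in>Pow V. if card U \<le> 1 then ?c U else 0)"
    using V by (intro sum.cong refl) (auto simp: permutes_fixing_complement_iff sum_sign_permutes finite_subset)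
  also have "\<dots> = (\<Sum>U\<in>insert {} ((\<lambda>v. {v}) ` V). ?c U)"
  proof -
    have "card U \<le> 1 \<longleftrightarrow> U = {} \<or> (\<exists>v. U = {v})" if "U \<subseteq> V" for U
      using card_le_1_iff_empty_or_singleton finite_subset[OF that V] .
    then have "{U \<in> Pow V. card U \<le> 1} = insert {} ((\<lambda>v. {v}) ` V)" by auto
    then show ?thesis using V by (simp add: sum.inter_filter[symmetric])
  qed
  also have "\<dots> = a ^ card V + (\<Sum>v\<in>V. a ^ (card V - 1) * b)"
  proof -
    have "(\<Sum>U\<in>(\<lambda>v. {v}) ` V. ?c U) = (\<Sum>v\<in>V. b * a ^ card (V - {v}))"
      by (simp add: sum.reindex inj_on_def)
    also have "\<dots> = (\<Sum>v\<in>V. a ^ (card V - 1) * b)"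
      using V by (intro sum.cong refl) (simp add: mult.commute)
    finally show ?thesis using V by (subst sum.insert) auto
  qed
  finally show ?thesis by simp
qed

lemma pcompose_power: "pcompose (p ^ k) r = pcompose p r ^ k"
  by (induction k) (simp_all add: pcompose_mult pcompose_1)

lemma order_1_one_minus_x_power_mult:
  fixes h :: "'a::idom poly"
  assumes "poly h 1 \<noteq> 0"
  shows "order 1 ([:1, -1:] ^ k * h) = k"
proof -
  have "[:1, -1:] ^ k = smult ((-1) ^ k) ([:-1, 1:] ^ k :: 'a poly)"
    by (simp flip: smult_power)
  then have "order 1 ([:1, -1:] ^ k :: 'a poly) = k"
    using order_power_n_n[of "1::'a" k] by (simp add: order_smult)
  moreover have "h \<noteq> 0" using assms by auto
  ultimately show ?thesis using assms by (simp add: order_mult order_0I)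
qed

lemma coeff_taylor_1_one_minus_x_power_mult:
  fixes h :: "'a::comm_ring_1 poly"
  shows "coeff (pcompose ([:1, -1:] ^ k * h) [:1, 1:]) k = (-1) ^ k * poly h 1"
proof -
  have "pcompose ([:1, -1:] ^ k * h) [:1, 1:] = monom ((-1) ^ k) k * pcompose h [:1, 1:]"
    by (simp add: pcompose_mult pcompose_power pcompose_pCons monom_altdef flip: smult_power)
  then show ?thesis by (simp add: coeff_monom_mult poly_0_coeff_0 [symmetric] poly_pcompose)
qed


section \<open>Digraphs with adjacency matrix I + q J\<close>

lemma nontrivial_relation_after_elimination:
  fixes g :: "'i \<Rightarrow> 'x \<Rightarrow> 'a::idom"
  assumes I: "finite I" "i0 \<in> I" and pivot: "g i0 u \<noteq> 0"
    and d: "\<exists>i\<in>I - {i0}. d i \<noteq> 0" "\<forall>x. (\<Sum>i\<in>I - {i0}. d i * (g i0 u * g i x - g i u * g i0 x)) = 0"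
  shows "\<exists>c. (\<exists>i\<in>I. c i \<noteq> 0) \<and> (\<forall>x. (\<Sum>i\<in>I. c i * g i x) = 0)"
proof -
  define c where "c i = (if i = i0 then - (\<Sum>j\<in>I - {i0}. d j * g j u) else g i0 u * d i)" for i
  have "(\<Sum>i\<in>I. c i * g i x) = 0" for x
  proof -
    have "(\<Sum>i\<in>I. c i * g i x) = c i0 * g i0 x + (\<Sum>i\<in>I - {i0}. g i0 u * d i * g i x)"
      using I by (simp add: sum.remove c_def)
    also have "\<dots> = (\<Sum>i\<in>I - {i0}. d i * (g i0 u * g i x - g i u * g i0 x))"
      by (simp add: c_def sum_distrib_left sum_distrib_right sum_subtractf algebra_simps)
    finally show ?thesis using d(2) by simp
  qed
  moreover have "\<exists>i\<in>I. c i \<noteq> 0"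
    using d(1) pivot by (auto simp: c_def)
  ultimately show ?thesis by blast
qed

lemma exists_nontrivial_relation_card_lt:
  fixes g :: "'i \<Rightarrow> 'x \<Rightarrow> 'a::idom"
  assumes "finite U" "finite I" "card U < card I" "\<forall>i\<in>I. \<forall>x. x \<notin> U \<longrightarrow> g i x = 0"
  shows "\<exists>c. (\<exists>i\<in>I. c i \<noteq> 0) \<and> (\<forall>x. (\<Sum>i\<in>I. c i * g i x) = 0)"
  using assms
proof (induction U arbitrary: I g rule: finite_induct)
  case empty
  then obtain i where "i \<in> I" by fastforce
  with empty show ?case
    by (intro exI[of _ "\<lambda>j. if j = i then 1 else 0"]) auto
next
  case (insert u U)
  show ?case
  proof (cases "\<forall>i\<in>I. g i u = 0")
    case True
    then have "\<forall>i\<in>I. \<forall>x. x \<notin> U \<longrightarrow> g i x = 0"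
      using insert.prems(3) by (metis insertE)
    then show ?thesis using insert by simp
  next
    case False
    then obtain i0 where i0: "i0 \<in> I" "g i0 u \<noteq> 0" by blast
    \<comment> \<open>Eliminate the coordinate u using the pivot g i0 u.\<close>
    define h where "h i x = g i0 u * g i x - g i u * g i0 x" for i x
    have "\<forall>i\<in>I - {i0}. \<forall>x. x \<notin> U \<longrightarrow> h i x = 0"
    proof (intro ballI allI impI)
      fix i x assume "i \<in> I - {i0}" "x \<notin> U"
      then show "h i x = 0" using insert.prems(3) i0(1) by (cases "x = u") (auto simp: h_def)
    qed
    moreover have "card U < card (I - {i0})"
      using insert i0 by (simp add: card_Diff_singleton)
    ultimately obtain d where "\<exists>i\<in>I - {i0}. d i \<noteq> 0" "\<forall>x. (\<Sum>i\<in>I - {i0}. d i * h i x) = 0"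
      using insert.IH insert.prems(1) by blast
    then show ?thesis
      using nontrivial_relation_after_elimination[of I i0 g u d] insert.prems(1) i0 by (simp add: h_def)
  qed
qed

locale I_plus_qJ_digraph = fin_digraph G for G :: "('v, 'e) pre_digraph" +
  fixes q :: nat
  assumes verts_nonempty: "verts G \<noteq> {}"
    and card_arcs_between: "\<And>w v. w \<in> verts G \<Longrightarrow> v \<in> verts G \<Longrightarrow>
       card {E \<in> arcs G. tail G E = w \<and> head G E = v} = (if w = v then 1 else 0) + q"
    and q_pos: "q > 0"
begin

lemma card_verts_pos: "card (verts G) > 0"
  using verts_nonempty by (simp add: card_gt_0_iff)

lemma zeta_poly_eq:
  "zeta_poly G = [:1, -1:] ^ (card (verts G) - 1) * [:1, - 1 - int (card (verts G) * q):]"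
proof -
  let ?n = "card (verts G)"
  have "zeta_poly G = (\<Sum>\<pi> | \<pi> permutes verts G. of_int (sign \<pi>) *
      (\<Prod>w\<in>verts G. (if \<pi> w = w then [:1, -1:] else 0) + [:0, - int q:]))"
    unfolding zeta_poly_def
  proof (intro sum.cong refl arg_cong2[where f="(*)"] prod.cong)
    fix \<pi> w assume "\<pi> \<in> {\<pi>. \<pi> permutes verts G}" and w: "w \<in> verts G"
    then have "\<pi> w \<in> verts G" by (simp add: permutes_in_image)
    then show "IAu G w (\<pi> w) = (if \<pi> w = w then [:1, -1:] else 0) + [:0, - int q:]"
      unfolding IAu_def card_arcs_between[OF w \<open>\<pi> w \<in> verts G\<close>] by (auto simp: of_nat_poly one_pCons diff_pCons)
  qed
  also have "\<dots> = [:1, -1:] ^ ?n + of_nat ?n * [:1, -1:] ^ (?n - 1) * [:0, - int q:]"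
    by (rule leibniz_det_diag_plus_const[OF finite_verts])
  also have "\<dots> = [:1, -1:] ^ (?n - 1) * [:1, - 1 - int (?n * q):]"
  proof -
    obtain k where "?n = Suc k" using card_verts_pos gr0_implies_Suc by blast
    then show ?thesis by (simp add: algebra_simps of_nat_poly flip: smult_add_left)
  qed
  finally show ?thesis .
qed

lemma r_ord_eq: "r_ord G = card (verts G) - 1"
  unfolding r_ord_def zeta_poly_eq
  using verts_nonempty q_pos by (intro order_1_one_minus_x_power_mult) simp

lemma gstar_eq: "gstar G = (-1) ^ card (verts G) * int (card (verts G)) * int q"
proof -
  obtain k where "card (verts G) = Suc k" using card_verts_pos gr0_implies_Suc by blast
  then show ?thesis
    unfolding gstar_def r_ord_eq zeta_poly_eq coeff_taylor_1_one_minus_x_power_mult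
    by (simp add: algebra_simps)
qed

definition const_on_verts :: "int \<Rightarrow> 'v \<Rightarrow> int" where
  "const_on_verts c v = (if v \<in> verts G then c else 0)"

lemma const_on_verts_in_ZV: "const_on_verts c \<in> ZV G"
  by (simp add: ZV_def const_on_verts_def)

lemma adj_eq:
  assumes f: "f \<in> ZV G"
  shows "adj G f v = f v + const_on_verts (int q * (\<Sum>w\<in>verts G. f w)) v"
proof (cases "v \<in> verts G")
  case False
  then have no_arcs: "{\<epsilon> \<in> arcs G. head G \<epsilon> = v} = {}" by auto
  show ?thesis using False f unfolding adj_def no_arcs by (simp add: const_on_verts_def ZV_def)
next
  case True
  let ?into = "{\<epsilon> \<in> arcs G. head G \<epsilon> = v}"
  have "adj G f v = (\<Sum>w\<in>verts G. \<Sum>\<epsilon>\<in>{\<epsilon> \<in> ?into. tail G \<epsilon> = w}. f (tail G \<epsilon>))"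
    unfolding adj_def by (rule sum.group[symmetric]) auto
  also have "\<dots> = (\<Sum>w\<in>verts G. of_nat (card {\<epsilon> \<in> arcs G. tail G \<epsilon> = w \<and> head G \<epsilon> = v}) * f w)"
    by (intro sum.cong refl) (simp add: Collect_conj_eq Int_commute)
  also have "\<dots> = (\<Sum>w\<in>verts G. (if w = v then f w else 0) + int q * f w)"
    using True by (intro sum.cong refl) (simp add: card_arcs_between algebra_simps)
  also have "\<dots> = f v + int q * (\<Sum>w\<in>verts G. f w)"
    using True by (simp add: sum.distrib sum_distrib_left)
  finally show ?thesis using True by (simp add: const_on_verts_def)
qed

lemma BF_lattice_eq: "BF_lattice G = range (\<lambda>k. const_on_verts (int q * k))"
proof (intro set_eqI iffI)
  fix g assume "g \<in> BF_lattice G"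
  then obtain f where "f \<in> ZV G" and "g = (\<lambda>v. f v - adj G f v)"
    unfolding BF_lattice_def by blast
  then have "g = const_on_verts (int q * - (\<Sum>w\<in>verts G. f w))"
    by (auto simp: adj_eq const_on_verts_def)
  then show "g \<in> range (\<lambda>k. const_on_verts (int q * k))" by blast
next
  fix g assume "g \<in> range (\<lambda>k. const_on_verts (int q * k))"
  then obtain k where g: "g = const_on_verts (int q * k)" by blast
  obtain v0 where v0: "v0 \<in> verts G" using verts_nonempty by blast
  \<comment> \<open>I - A sends -k times a point mass to the constant q k.\<close>
  define f where "f v = (if v = v0 then - k else 0)" for v
  have f: "f \<in> ZV G" using v0 by (simp add: ZV_def f_def)
  have "(\<Sum>w\<in>verts G. f w) = - k" using v0 by (simp add: f_def)
  then have "g = (\<lambda>v. f v - adj G f v)"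
    by (simp add: g adj_eq[OF f] const_on_verts_def fun_eq_iff)
  then show "g \<in> BF_lattice G" using f unfolding BF_lattice_def by blast
qed

definition BF_rel :: "(('v \<Rightarrow> int) \<times> ('v \<Rightarrow> int)) set" where
  "BF_rel = {(f, g). f \<in> ZV G \<and> g \<in> ZV G \<and> f - g \<in> BF_lattice G}"

lemma BF_eq_quotient: "BF G = ZV G // BF_rel"
  unfolding BF_def BF_rel_def ..

lemma BF_rel_iff:
  "(f, g) \<in> BF_rel \<longleftrightarrow> f \<in> ZV G \<and> g \<in> ZV G \<and> (\<exists>k. \<forall>v\<in>verts G. f v - g v = int q * k)"
proof -
  have "f - g = const_on_verts (int q * k) \<longleftrightarrow> (\<forall>v\<in>verts G. f v - g v = int q * k)"
    if "f \<in> ZV G" "g \<in> ZV G" for k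
    using that by (auto simp: ZV_def const_on_verts_def fun_eq_iff)
  then show ?thesis unfolding BF_rel_def BF_lattice_eq by blast
qed

lemma equiv_BF_rel: "equiv (ZV G) BF_rel"
proof (rule equivI)
  show "refl_on (ZV G) BF_rel" unfolding refl_on_def BF_rel_iff by (auto simp: BF_rel_def)
  show "sym BF_rel" unfolding sym_def BF_rel_iff by (metis minus_diff_eq mult_minus_right)
  show "trans BF_rel" unfolding trans_def BF_rel_iff
    by (metis (no_types, opaque_lifting) diff_add_cancel add_diff_eq distrib_left diff_diff_eq2)
  show "BF_rel \<subseteq> ZV G \<times> ZV G" unfolding BF_rel_def by auto
qed

lemma scaled_in_BF_lattice_imp_const:
  assumes "f \<in> ZV G" "m > 0" "(\<lambda>v. m * f v) \<in> BF_lattice G"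
  obtains c where "f = const_on_verts c"
proof -
  obtain k where k: "(\<lambda>v. m * f v) = const_on_verts (int q * k)"
    using assms(3) unfolding BF_lattice_eq by blast
  obtain v0 where v0: "v0 \<in> verts G" using verts_nonempty by blast
  have "m * f v = m * f v0" if "v \<in> verts G" for v
    using fun_cong[OF k, of v] fun_cong[OF k, of v0] that v0 by (simp add: const_on_verts_def)
  then have "f = const_on_verts (f v0)"
    using assms(1,2) by (auto simp: ZV_def const_on_verts_def fun_eq_iff)
  then show ?thesis by (rule that)
qed

lemma BF_tors_eq: "BF_tors G = (\<lambda>m. BF_rel `` {const_on_verts (int m)}) ` {..<q}"
proof (intro set_eqI iffI)
  fix C assume "C \<in> BF_tors G"
  then obtain m f where C: "C \<in> BF G" and "m > 0" and f: "f \<in> C" and "(\<lambda>v. m * f v) \<in> BF_lattice G"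
    unfolding BF_tors_def by blast
  moreover have fZ: "f \<in> ZV G"
    using C f in_quotient_imp_subset[OF equiv_BF_rel] by (auto simp: BF_eq_quotient)
  ultimately obtain c where fc: "f = const_on_verts c" using scaled_in_BF_lattice_imp_const by blast
  obtain f0 where "C = BF_rel `` {f0}" using C unfolding BF_eq_quotient by (rule quotientE)
  then have C_eq: "C = BF_rel `` {f}" using f equiv_class_eq[OF equiv_BF_rel] by simp
  have "(f, const_on_verts (c mod int q)) \<in> BF_rel"
    using fZ by (auto simp: BF_rel_iff fc const_on_verts_in_ZV const_on_verts_def
        intro!: exI[of _ "c div int q"] simp flip: minus_mod_eq_mult_div)
  then have "C = BF_rel `` {const_on_verts (int (nat (c mod int q)))}"
    using C_eq q_pos equiv_class_eq[OF equiv_BF_rel] by simp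
  moreover have "nat (c mod int q) < q" using q_pos by (simp add: nat_less_iff)
  ultimately show "C \<in> (\<lambda>m. BF_rel `` {const_on_verts (int m)}) ` {..<q}" by blast
next
  fix C assume "C \<in> (\<lambda>m. BF_rel `` {const_on_verts (int m)}) ` {..<q}"
  then obtain m where C: "C = BF_rel `` {const_on_verts (int m)}" by blast
  have "C \<in> BF G" unfolding BF_eq_quotient C using const_on_verts_in_ZV by (rule quotientI)
  moreover have "const_on_verts (int m) \<in> C"
    unfolding C using equiv_class_self[OF equiv_BF_rel const_on_verts_in_ZV] .
  moreover have "(\<lambda>v. int q * const_on_verts (int m) v) \<in> BF_lattice G"
    unfolding BF_lattice_eq by (auto simp: const_on_verts_def fun_eq_iff)
  ultimately show "C \<in> BF_tors G"
    unfolding BF_tors_def using q_pos by (intro CollectI conjI exI[of _ "int q"]) auto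
qed

lemma card_BF_tors: "card (BF_tors G) = q"
proof -
  have "inj_on (\<lambda>m. BF_rel `` {const_on_verts (int m)}) {..<q}"
  proof
    fix a b assume ab: "a \<in> {..<q}" "b \<in> {..<q}"
      and "BF_rel `` {const_on_verts (int a)} = BF_rel `` {const_on_verts (int b)}"
    then have "(const_on_verts (int a), const_on_verts (int b)) \<in> BF_rel"
      using eq_equiv_class_iff[OF equiv_BF_rel const_on_verts_in_ZV const_on_verts_in_ZV] by simp
    then obtain k where "int a - int b = int q * k"
      using verts_nonempty by (auto simp: BF_rel_iff const_on_verts_def)
    then have "[a = b] (mod q)"
      by (metis cong_iff_dvd_diff cong_int_iff dvd_triv_left)
    then show "a = b" using ab by (simp add: cong_less_modulus_unique_nat)
  qed
  then show ?thesis unfolding BF_tors_eq by (simp add: card_image)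
qed

lemma some_in_BF_class:
  assumes "C \<in> BF G"
  shows "(SOME f. f \<in> C) \<in> C" "(SOME f. f \<in> C) \<in> ZV G"
proof -
  show "(SOME f. f \<in> C) \<in> C"
    using assms in_quotient_imp_non_empty[OF equiv_BF_rel] unfolding BF_eq_quotient
    by (metis ex_in_conv someI_ex)
  then show "(SOME f. f \<in> C) \<in> ZV G"
    using assms in_quotient_imp_subset[OF equiv_BF_rel] unfolding BF_eq_quotient by blast
qed

lemma card_le_if_BF_indep:
  assumes S: "S \<subseteq> BF G" "finite S" and indep: "BF_indep G S"
  shows "card S \<le> card (verts G) - 1"
proof (rule ccontr)
  let ?rep = "\<lambda>C. SOME f. f \<in> C"
  obtain v0 where v0: "v0 \<in> verts G" using verts_nonempty by blast
  assume "\<not> ?thesis"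
  then have card_lt: "card (verts G - {v0}) < card S" using v0 by simp
  \<comment> \<open>Subtracting the value at v0 leaves vectors supported on the other vertices,
    so too many classes admit a relation modulo constants; q times a constant lies in the lattice.\<close>
  define g where "g C x = ?rep C x - const_on_verts (?rep C v0) x" for C x
  have "g C x = 0" if "C \<in> S" "x \<notin> verts G - {v0}" for C x
  proof (cases "x = v0")
    case False
    then have "x \<notin> verts G" using that(2) by simp
    moreover have "?rep C \<in> ZV G" using S that(1) some_in_BF_class(2) by blast
    ultimately show ?thesis by (simp add: g_def const_on_verts_def ZV_def)
  qed (simp add: g_def const_on_verts_def v0)
  then have "\<forall>C\<in>S. \<forall>x. x \<notin> verts G - {v0} \<longrightarrow> g C x = 0" by blast
  from exists_nontrivial_relation_card_lt[OF _ S(2) card_lt this]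
  obtain c where c: "\<exists>C\<in>S. c C \<noteq> 0" "\<forall>x. (\<Sum>C\<in>S. c C * g C x) = 0"
    by auto
  define K where "K = (\<Sum>C\<in>S. c C * ?rep C v0)"
  have "(\<Sum>C\<in>S. c C * ?rep C v) = const_on_verts K v" for v
  proof -
    have "c C * ?rep C v = c C * g C v + c C * const_on_verts (?rep C v0) v" for C
      by (simp add: g_def algebra_simps)
    then have "(\<Sum>C\<in>S. c C * ?rep C v)
        = (\<Sum>C\<in>S. c C * g C v) + (\<Sum>C\<in>S. c C * const_on_verts (?rep C v0) v)"
      by (simp add: sum.distrib)
    then show ?thesis using c(2) by (simp add: K_def const_on_verts_def)
  qed
  then have "(\<lambda>v. \<Sum>C\<in>S. (int q * c C) * ?rep C v) = const_on_verts (int q * K)"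
    by (simp add: fun_eq_iff const_on_verts_def mult.assoc flip: sum_distrib_left)
  then have "(\<lambda>v. \<Sum>C\<in>S. (int q * c C) * ?rep C v) \<in> BF_lattice G"
    unfolding BF_lattice_eq by (rule range_eqI)
  then have "\<forall>C\<in>S. (\<lambda>C. int q * c C) C = 0"
    by (rule indep[unfolded BF_indep_def, THEN spec, THEN mp])
  then show False using c(1) q_pos by simp
qed

definition point_mass :: "'v \<Rightarrow> 'v \<Rightarrow> int" where
  "point_mass u v = (if v = u then 1 else 0)"

definition point_class :: "'v \<Rightarrow> ('v \<Rightarrow> int) set" where
  "point_class u = BF_rel `` {point_mass u}"

lemma point_mass_in_ZV: "u \<in> verts G \<Longrightarrow> point_mass u \<in> ZV G"
  by (simp add: ZV_def point_mass_def)

lemma point_class_in_BF: "u \<in> verts G \<Longrightarrow> point_class u \<in> BF G"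
  unfolding point_class_def BF_eq_quotient by (intro quotientI point_mass_in_ZV)

lemma inj_on_point_class:
  assumes "v0 \<in> verts G"
  shows "inj_on point_class (verts G - {v0})"
proof
  fix a b assume a: "a \<in> verts G - {v0}" and b: "b \<in> verts G - {v0}"
    and "point_class a = point_class b"
  then have "(point_mass a, point_mass b) \<in> BF_rel"
    using eq_equiv_class_iff[OF equiv_BF_rel point_mass_in_ZV point_mass_in_ZV] by (simp add: point_class_def)
  then obtain k where k: "\<forall>v\<in>verts G. point_mass a v - point_mass b v = int q * k"
    unfolding BF_rel_iff by blast
  show "a = b"
  proof (rule ccontr)
    assume "a \<noteq> b"
    then have "1 = int q * k" using k a by (auto simp: point_mass_def)
    moreover have "0 = int q * k" using k assms a b by (auto simp: point_mass_def)
    ultimately show False by simp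
  qed
qed

lemma point_class_rep:
  assumes "u \<in> verts G"
  obtains t where "\<And>v. v \<in> verts G \<Longrightarrow> (SOME f. f \<in> point_class u) v = point_mass u v - t"
proof -
  have "(SOME f. f \<in> point_class u) \<in> point_class u"
    using assms point_class_in_BF some_in_BF_class(1) by blast
  then have "(point_mass u, SOME f. f \<in> point_class u) \<in> BF_rel" unfolding point_class_def by simp
  then obtain k where "\<forall>v\<in>verts G. point_mass u v - (SOME f. f \<in> point_class u) v = int q * k"
    unfolding BF_rel_iff by blast
  then show ?thesis by (intro that[of "int q * k"]) auto
qed

lemma BF_indep_point_classes:
  assumes v0: "v0 \<in> verts G"
  shows "BF_indep G (point_class ` (verts G - {v0}))"
  unfolding BF_indep_def
proof (intro allI impI ballI)
  let ?U = "verts G - {v0}"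
  let ?rep = "\<lambda>C. SOME f. f \<in> C"
  fix c :: "('v \<Rightarrow> int) set \<Rightarrow> int" and C
  assume rel: "(\<lambda>v. \<Sum>C\<in>point_class ` ?U. c C * ?rep C v) \<in> BF_lattice G"
    and C: "C \<in> point_class ` ?U"
  have "\<exists>t. \<forall>v\<in>verts G. ?rep (point_class u) v = point_mass u v - t" if "u \<in> ?U" for u
    using point_class_rep that by (metis DiffD1)
  then obtain t where t: "\<And>u v. u \<in> ?U \<Longrightarrow> v \<in> verts G \<Longrightarrow> ?rep (point_class u) v = point_mass u v - t u"
    by metis
  obtain K where K: "(\<lambda>v. \<Sum>C\<in>point_class ` ?U. c C * ?rep C v) = const_on_verts (int q * K)"
    using rel unfolding BF_lattice_eq by blast
  define T where "T = (\<Sum>u\<in>?U. c (point_class u) * t u)"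
  have value_at: "(\<Sum>C\<in>point_class ` ?U. c C * ?rep C v) = (if v \<in> ?U then c (point_class v) else 0) - T"
    if v: "v \<in> verts G" for v
  proof -
    have "(\<Sum>C\<in>point_class ` ?U. c C * ?rep C v) = (\<Sum>u\<in>?U. c (point_class u) * (point_mass u v - t u))"
      using v by (simp add: sum.reindex[OF inj_on_point_class[OF v0]] t)
    also have "\<dots> = (\<Sum>u\<in>?U. c (point_class u) * point_mass u v) - T"
      by (simp add: T_def right_diff_distrib sum_subtractf)
    also have "(\<Sum>u\<in>?U. c (point_class u) * point_mass u v) = (if v \<in> ?U then c (point_class v) else 0)"
      by (simp add: point_mass_def if_distrib sum.delta cong: if_cong)
    finally show ?thesis .
  qed
  \<comment> \<open>Compare the values at u and at v0, where no point mass of the family lives.\<close>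
  obtain u where u: "u \<in> ?U" "C = point_class u" using C by blast
  have "c C - T = int q * K" using value_at[of u] fun_cong[OF K, of u] u by (simp add: const_on_verts_def)
  moreover have "- T = int q * K" using value_at[OF v0] fun_cong[OF K, of v0] v0 by (simp add: const_on_verts_def)
  ultimately show "c C = 0" by simp
qed

lemma BF_rank_eq: "BF_rank G = card (verts G) - 1"
proof -
  let ?ranks = "{card S |S. S \<subseteq> BF G \<and> finite S \<and> BF_indep G S}"
  obtain v0 where v0: "v0 \<in> verts G" using verts_nonempty by blast
  have "card (point_class ` (verts G - {v0})) = card (verts G) - 1"
    using v0 by (simp add: card_image inj_on_point_class)
  then have mem: "card (verts G) - 1 \<in> ?ranks"
    using v0 point_class_in_BF BF_indep_point_classes[OF v0]
    by (intro CollectI exI[of _ "point_class ` (verts G - {v0})"]) auto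
  have bound: "\<And>r. r \<in> ?ranks \<Longrightarrow> r \<le> card (verts G) - 1"
    using card_le_if_BF_indep by blast
  then have "finite ?ranks"
    unfolding finite_nat_set_iff_bounded_le by blast
  then show ?thesis unfolding BF_rank_def by (rule Max_eqI[OF _ bound mem])
qed

end


section \<open>The quotient digraph Y^+\<close>

lemma cong_mult_inverse_iff:
  fixes a b x y m :: int
  assumes "[x * y = 1] (mod m)"
  shows "[a * y = b] (mod m) \<longleftrightarrow> [a = b * x] (mod m)"
proof
  assume "[a * y = b] (mod m)"
  then have "[a * y * x = b * x] (mod m)" by (rule cong_scalar_right)
  moreover have "[a * y * x = a] (mod m)"
    using cong_scalar_left[OF assms, of a] by (simp add: mult_ac)
  ultimately show "[a = b * x] (mod m)" by (meson cong_sym cong_trans)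
next
  assume "[a = b * x] (mod m)"
  then have "[a * y = b * x * y] (mod m)" by (rule cong_scalar_right)
  moreover have "[b * x * y = b] (mod m)"
    using cong_scalar_left[OF assms, of b] by (simp add: mult_ac)
  ultimately show "[a * y = b] (mod m)" by (rule cong_trans)
qed

text \<open>The \<open>\<langle>j\<rangle>\<close>-orbits of the vertex \<open>((), \<sigma>)\<close> and of the edge \<open>(e, \<sigma>)\<close> of Y:
  j acts on \<open>\<Delta> = {1..<p}\<close> as \<open>\<sigma> \<mapsto> p - \<sigma>\<close>.\<close>

definition vert_orbit :: "nat \<Rightarrow> nat \<Rightarrow> (unit \<times> nat) set" where
  "vert_orbit p \<sigma> = {((), \<sigma>), ((), p - \<sigma>)}"

definition arc_orbit :: "nat \<Rightarrow> xedge \<Rightarrow> nat \<Rightarrow> (xedge \<times> nat) set" where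
  "arc_orbit p e \<sigma> = {(e, \<sigma>), (e, p - \<sigma>)}"

lemma finite_X_edges: "finite (X_edges p)"
proof -
  have "X_edges p \<subseteq> insert E0 ((\<lambda>(i, k). Eik i k) ` ({..p} \<times> {..p}))"
    unfolding X_edges_def by auto
  then show ?thesis by (rule finite_subset) simp
qed

lemma card_Eik:
  assumes "finite I"
  shows "card {Eik i k | i k. i \<in> I \<and> 1 \<le> k \<and> k \<le> i} = (\<Sum>i\<in>I. i)"
proof -
  have "{Eik i k | i k. i \<in> I \<and> 1 \<le> k \<and> k \<le> i} = (\<lambda>(i, k). Eik i k) ` (SIGMA i:I. {1..i})"
    by auto
  moreover have "inj_on (\<lambda>(i, k). Eik i k) (SIGMA i:I. {1..i})" by (auto simp: inj_on_def)
  ultimately show ?thesis using assms by (simp add: card_image card_SigmaI)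
qed

locale odd_prime =
  fixes p :: nat
  assumes prime: "prime p" and odd: "odd p"
begin

lemma p_ge_3: "p \<ge> 3"
  using prime_ge_2_nat[OF prime] odd by (cases "p = 2") auto

lemma not_dvd_if_unit: "\<sigma> \<in> {1..<p} \<Longrightarrow> \<not> p dvd \<sigma>"
  by (auto dest: dvd_imp_le)

lemma not_dvd_mult_if_units:
  assumes "a \<in> {1..<p}" "b \<in> {1..<p}"
  shows "\<not> p dvd a * b"
  using assms not_dvd_if_unit prime_dvd_mult_iff[OF prime] by blast

lemma mult_mod_in_units:
  assumes "a \<in> {1..<p}" "b \<in> {1..<p}"
  shows "a * b mod p \<in> {1..<p}"
proof -
  have "a * b mod p \<noteq> 0" using not_dvd_mult_if_units[OF assms] by (simp add: dvd_eq_mod_eq_0)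
  then show ?thesis using p_ge_3 by simp
qed

lemma ex1_inverse: "i \<in> {1..<p} \<Longrightarrow> \<exists>!b. b \<in> Delta p \<and> dmul p i b = 1"
proof -
  assume i: "i \<in> {1..<p}"
  have cop: "coprime i p"
    using prime_imp_coprime[OF prime not_dvd_if_unit[OF i]] by (simp add: coprime_commute)
  obtain x where "[i * x = 1] (mod p)" using cong_solve_coprime_nat[OF cop] by auto
  then have ib: "i * (x mod p) mod p = 1"
    using p_ge_3 by (simp add: cong_def mod_mult_right_eq)
  moreover have "x mod p \<noteq> 0" using ib by (intro notI) simp
  ultimately have b: "x mod p \<in> Delta p"
    using p_ge_3 by (simp add: Delta_def)
  show ?thesis
  proof (rule ex1I[of _ "x mod p"])
    show "x mod p \<in> Delta p \<and> dmul p i (x mod p) = 1" using b ib by (simp add: dmul_def)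
  next
    fix b' assume b': "b' \<in> Delta p \<and> dmul p i b' = 1"
    then have "[i * b' = i * (x mod p)] (mod p)" using ib by (simp add: dmul_def cong_def)
    then have "[b' = x mod p] (mod p)" using cong_mult_lcancel_nat[OF cop] by blast
    then show "b' = x mod p" using b' b unfolding Delta_def by (intro cong_less_modulus_unique_nat) auto
  qed
qed

lemma dinv_in_units: "i \<in> {1..<p} \<Longrightarrow> dinv p i \<in> {1..<p}"
  and cong_mult_dinv: "i \<in> {1..<p} \<Longrightarrow> [i * dinv p i = 1] (mod p)"
  using theI'[OF ex1_inverse, of i] p_ge_3 by (auto simp: dinv_def Delta_def dmul_def cong_def)

lemma lorbit_jgrp: "\<sigma> \<in> {1..<p} \<Longrightarrow> lorbit (jgrp p) (dmul p) (x, \<sigma>) = {(x, \<sigma>), (x, p - \<sigma>)}"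
proof -
  assume \<sigma>: "\<sigma> \<in> {1..<p}"
  have "(p - 1) * \<sigma> = (p - \<sigma>) + p * (\<sigma> - 1)"
    using \<sigma> by (simp add: algebra_simps diff_mult_distrib diff_mult_distrib2)
  then have "(p - 1) * \<sigma> mod p = (p - \<sigma>) mod p" by (simp only: mod_mult_self2)
  also have "\<dots> = p - \<sigma>" using \<sigma> by simp
  finally have "(p - 1) * \<sigma> mod p = p - \<sigma>" .
  moreover have "lorbit (jgrp p) (dmul p) (x, \<sigma>) = {(x, 1 * \<sigma> mod p), (x, (p - 1) * \<sigma> mod p)}"
    unfolding lorbit_def jgrp_def dmul_def by (auto intro: exI[of _ 1])
  ultimately show ?thesis using \<sigma> by simp
qed

lemma vert_orbit_eq_iff:
  "\<sigma> \<in> {1..<p} \<Longrightarrow> \<tau> \<in> {1..<p} \<Longrightarrow> vert_orbit p \<sigma> = vert_orbit p \<tau> \<longleftrightarrow> \<sigma> = \<tau> \<or> \<sigma> + \<tau> = p"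
  by (auto simp: vert_orbit_def doubleton_eq_iff)

lemma dvd_sum_of_units_iff:
  assumes "\<sigma> \<in> {1..<p}" "\<tau> \<in> {1..<p}"
  shows "p dvd \<sigma> + \<tau> \<longleftrightarrow> \<sigma> + \<tau> = p"
proof
  assume "p dvd \<sigma> + \<tau>"
  then obtain k where k: "\<sigma> + \<tau> = p * k" by (elim dvdE)
  have "k \<noteq> 0"
  proof
    assume "k = 0"
    then show False using k assms by simp
  qed
  moreover have "p * k < p * 2" using k assms unfolding atLeastLessThan_iff by linarith
  then have "k < 2" by simp
  ultimately show "\<sigma> + \<tau> = p" using k by (simp add: less_2_cases_iff)
qed simp

lemma vert_orbit_mod_eq_iff:
  assumes "\<not> p dvd a" "\<not> p dvd b"
  shows "vert_orbit p (a mod p) = vert_orbit p (b mod p)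
    \<longleftrightarrow> [int a = int b] (mod int p) \<or> [int a = - int b] (mod int p)"
proof -
  have units: "a mod p \<in> {1..<p}" "b mod p \<in> {1..<p}"
    using assms p_ge_3 by (auto simp: dvd_eq_mod_eq_0 intro: Nat.gr0I)
  have "vert_orbit p (a mod p) = vert_orbit p (b mod p) \<longleftrightarrow> a mod p = b mod p \<or> a mod p + b mod p = p"
    using vert_orbit_eq_iff[OF units] .
  also have "a mod p + b mod p = p \<longleftrightarrow> p dvd a + b"
  proof -
    have "p dvd a + b \<longleftrightarrow> p dvd a mod p + b mod p" by (simp add: dvd_eq_mod_eq_0 mod_add_eq)
    then show ?thesis using dvd_sum_of_units_iff[OF units] by simp
  qed
  also have "p dvd a + b \<longleftrightarrow> [int a = - int b] (mod int p)"
    by (simp add: cong_iff_dvd_diff flip: of_nat_add int_dvd_int_iff)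
  also have "a mod p = b mod p \<longleftrightarrow> [int a = int b] (mod int p)"
    by (metis cong_def cong_int_iff)
  finally show ?thesis .
qed

lemma int_cong_mult_dinv:
  assumes "i \<in> {1..<p}"
  shows "[int i * int (dinv p i) = 1] (mod int p)"
  using cong_int_iff[of "i * dinv p i" 1 p] cong_mult_dinv[OF assms] by simp

lemma vert_orbit_mult_dinv_swap:
  assumes \<sigma>: "\<sigma> \<in> {1..<p}" and \<tau>: "\<tau> \<in> {1..<p}" and i: "i \<in> {1..<p}"
  shows "vert_orbit p (\<sigma> * dinv p i mod p) = vert_orbit p \<tau>
    \<longleftrightarrow> vert_orbit p (\<sigma> * dinv p \<tau> mod p) = vert_orbit p i"
proof -
  \<comment> \<open>Both sides say \<open>\<sigma> = \<plusminus>i \<tau> (mod p)\<close>.\<close>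
  let ?pm = "\<lambda>a b :: int. [a = b] (mod int p) \<or> [a = - b] (mod int p)"
  have not_dvd: "\<not> p dvd \<sigma> * dinv p i" "\<not> p dvd \<sigma> * dinv p \<tau>" "\<not> p dvd \<tau>" "\<not> p dvd i"
    using not_dvd_mult_if_units[OF \<sigma>] dinv_in_units not_dvd_if_unit \<tau> i by auto
  have "vert_orbit p (\<sigma> * dinv p i mod p) = vert_orbit p \<tau> \<longleftrightarrow> ?pm (int \<sigma> * int (dinv p i)) (int \<tau>)"
    using vert_orbit_mod_eq_iff[OF not_dvd(1,3)] \<tau> by simp
  also have "\<dots> \<longleftrightarrow> ?pm (int \<sigma>) (int i * int \<tau>)"
    using cong_mult_inverse_iff[OF int_cong_mult_dinv[OF i]] by (simp add: mult.commute)
  also have "\<dots> \<longleftrightarrow> ?pm (int \<sigma> * int (dinv p \<tau>)) (int i)"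
    using cong_mult_inverse_iff[OF int_cong_mult_dinv[OF \<tau>]] by simp
  also have "\<dots> \<longleftrightarrow> vert_orbit p (\<sigma> * dinv p \<tau> mod p) = vert_orbit p i"
    using vert_orbit_mod_eq_iff[OF not_dvd(2,4)] i by simp
  finally show ?thesis .
qed

lemma vert_orbit_minus_mult:
  assumes "\<sigma> \<in> {1..<p}" "a \<in> {1..<p}"
  shows "vert_orbit p ((p - \<sigma>) * a mod p) = vert_orbit p (\<sigma> * a mod p)"
proof -
  have "p - \<sigma> \<in> {1..<p}" using assms by auto
  then have not_dvd: "\<not> p dvd (p - \<sigma>) * a" "\<not> p dvd \<sigma> * a"
    using not_dvd_mult_if_units assms by auto
  have "p - \<sigma> + \<sigma> = p" using assms by simp
  then have "(p - \<sigma>) * a + \<sigma> * a = p * a" by (metis add_mult_distrib)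
  then have "int ((p - \<sigma>) * a) - - int (\<sigma> * a) = int p * int a"
    by (simp only: diff_minus_eq_add flip: of_nat_add of_nat_mult)
  then have "int p dvd int ((p - \<sigma>) * a) - - int (\<sigma> * a)" by simp
  then show ?thesis unfolding vert_orbit_mod_eq_iff[OF not_dvd] cong_iff_dvd_diff by blast
qed

lemma alpha_in_units: "e \<in> X_edges p \<Longrightarrow> alpha p e \<in> {1..<p}"
  using p_ge_3 dinv_in_units by (auto simp: X_edges_def alpha_def)

lemma verts_Yplus: "verts (Yplus p) = vert_orbit p ` {1..<p}"
  unfolding Yplus_def quot_def Yd_def derived_def Xb_def Delta_def
  by (force simp: lorbit_jgrp vert_orbit_def)

lemma arcs_Yplus: "arcs (Yplus p) = (\<lambda>(e, \<sigma>). arc_orbit p e \<sigma>) ` (X_edges p \<times> {1..<p})"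
  unfolding Yplus_def quot_def Yd_def derived_def Xb_def Delta_def
  by (force simp: lorbit_jgrp arc_orbit_def)

lemma some_in_arc_orbit: "(SOME \<epsilon>. \<epsilon> \<in> arc_orbit p e \<sigma>) \<in> {(e, \<sigma>), (e, p - \<sigma>)}"
  unfolding arc_orbit_def by (rule someI[of _ "(e, \<sigma>)"]) simp

lemma tail_Yplus:
  assumes \<sigma>: "\<sigma> \<in> {1..<p}"
  shows "tail (Yplus p) (arc_orbit p e \<sigma>) = vert_orbit p \<sigma>"
proof -
  define \<epsilon> where "\<epsilon> = (SOME \<epsilon>. \<epsilon> \<in> arc_orbit p e \<sigma>)"
  have "\<epsilon> = (e, \<sigma>) \<or> \<epsilon> = (e, p - \<sigma>)" using some_in_arc_orbit by (simp add: \<epsilon>_def)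
  moreover have "p - \<sigma> \<in> {1..<p}" using \<sigma> by auto
  ultimately have "lorbit (jgrp p) (dmul p) (tail (Yd p) \<epsilon>) = vert_orbit p \<sigma>"
    using \<sigma> by (auto simp: Yd_def derived_def Xb_def lorbit_jgrp vert_orbit_def)
  then show ?thesis by (simp add: Yplus_def quot_def \<epsilon>_def)
qed

lemma head_Yplus:
  assumes e: "e \<in> X_edges p" and \<sigma>: "\<sigma> \<in> {1..<p}"
  shows "head (Yplus p) (arc_orbit p e \<sigma>) = vert_orbit p (\<sigma> * alpha p e mod p)"
proof -
  define \<epsilon> where "\<epsilon> = (SOME \<epsilon>. \<epsilon> \<in> arc_orbit p e \<sigma>)"
  have a: "alpha p e \<in> {1..<p}" using alpha_in_units[OF e] .
  have "p - \<sigma> \<in> {1..<p}" using \<sigma> by auto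
  then have units: "(p - \<sigma>) * alpha p e mod p \<in> {1..<p}" "\<sigma> * alpha p e mod p \<in> {1..<p}"
    using mult_mod_in_units a \<sigma> by auto
  have "\<epsilon> = (e, \<sigma>) \<or> \<epsilon> = (e, p - \<sigma>)" using some_in_arc_orbit by (simp add: \<epsilon>_def)
  then have "lorbit (jgrp p) (dmul p) (head (Yd p) \<epsilon>) = vert_orbit p (\<sigma> * alpha p e mod p)"
  proof
    assume "\<epsilon> = (e, \<sigma>)"
    then show ?thesis using units(2) by (simp add: Yd_def derived_def dmul_def lorbit_jgrp vert_orbit_def)
  next
    assume "\<epsilon> = (e, p - \<sigma>)"
    then show ?thesis using units vert_orbit_minus_mult[OF \<sigma> a]
      by (simp add: Yd_def derived_def dmul_def lorbit_jgrp vert_orbit_def)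
  qed
  then show ?thesis by (simp add: Yplus_def quot_def \<epsilon>_def)
qed

lemma arcs_YplusE:
  assumes "E \<in> arcs (Yplus p)"
  obtains e \<sigma> where "e \<in> X_edges p" "\<sigma> \<in> {1..<p}" "E = arc_orbit p e \<sigma>"
  using assms unfolding arcs_Yplus by auto

lemma units_in_vert_orbit:
  assumes "\<sigma> \<in> {1..<p}"
  shows "{i \<in> {1..<p}. vert_orbit p \<sigma> = vert_orbit p i} = {\<sigma>, p - \<sigma>}"
  using assms by (auto simp: vert_orbit_def doubleton_eq_iff)

lemma card_edges_into_orbit:
  assumes \<sigma>: "\<sigma> \<in> {1..<p}" and \<tau>: "\<tau> \<in> {1..<p}"
  shows "card {e \<in> X_edges p. vert_orbit p (\<sigma> * alpha p e mod p) = vert_orbit p \<tau>}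
    = (if vert_orbit p \<sigma> = vert_orbit p \<tau> then 1 else 0) + p"
proof -
  define i0 where "i0 = \<sigma> * dinv p \<tau> mod p"
  have i0: "i0 \<in> {1..<p}" unfolding i0_def using mult_mod_in_units[OF \<sigma> dinv_in_units[OF \<tau>]] .
  \<comment> \<open>The loop e0 contributes the identity; among the e_(i,k), exactly i = i0 and i = p - i0 qualify.\<close>
  define loops where "loops = (if vert_orbit p \<sigma> = vert_orbit p \<tau> then {E0} else {})"
  define others where "others = {Eik i k | i k. i \<in> {i0, p - i0} \<and> 1 \<le> k \<and> k \<le> i}"
  have "{e \<in> X_edges p. vert_orbit p (\<sigma> * alpha p e mod p) = vert_orbit p \<tau>} = loops \<union> others"
  proof (intro set_eqI)
    fix e
    show "e \<in> {e \<in> X_edges p. vert_orbit p (\<sigma> * alpha p e mod p) = vert_orbit p \<tau>} \<longleftrightarrow> e \<in> loops \<union> others"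
    proof (cases e)
      case E0
      then show ?thesis using \<sigma> by (simp add: loops_def others_def X_edges_def alpha_def)
    next
      case (Eik i k)
      have "vert_orbit p (\<sigma> * dinv p i mod p) = vert_orbit p \<tau> \<longleftrightarrow> i \<in> {i0, p - i0}"
        if "i \<in> {1..<p}"
        using vert_orbit_mult_dinv_swap[OF \<sigma> \<tau> that] units_in_vert_orbit[OF i0] that
        by (auto simp: i0_def)
      moreover have "i \<in> {i0, p - i0} \<Longrightarrow> i \<in> {1..<p}" using i0 by auto
      ultimately show ?thesis using p_ge_3
        by (auto simp: Eik loops_def others_def X_edges_def alpha_def)
    qed
  qed
  moreover have "i0 \<noteq> p - i0"
  proof
    assume "i0 = p - i0"
    then have "p = 2 * i0" using i0 by auto
    then show False using odd by simp
  qed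
  then have "card others = p"
    using i0 unfolding others_def by (subst card_Eik) auto
  moreover have "others \<subseteq> X_edges p" using i0 by (auto simp: others_def X_edges_def)
  then have "finite others" using finite_X_edges finite_subset by blast
  ultimately show ?thesis by (simp add: card_Un_disjoint loops_def others_def)
qed

lemma card_arcs_between_Yplus:
  assumes "w \<in> verts (Yplus p)" "v \<in> verts (Yplus p)"
  shows "card {E \<in> arcs (Yplus p). tail (Yplus p) E = w \<and> head (Yplus p) E = v}
    = (if w = v then 1 else 0) + p"
proof -
  obtain \<sigma> \<tau> where \<sigma>: "\<sigma> \<in> {1..<p}" "w = vert_orbit p \<sigma>" and \<tau>: "\<tau> \<in> {1..<p}" "v = vert_orbit p \<tau>"
    using assms unfolding verts_Yplus by blast
  let ?good = "{e \<in> X_edges p. vert_orbit p (\<sigma> * alpha p e mod p) = vert_orbit p \<tau>}"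
  have "{E \<in> arcs (Yplus p). tail (Yplus p) E = w \<and> head (Yplus p) E = v} = (\<lambda>e. arc_orbit p e \<sigma>) ` ?good"
  proof (intro set_eqI iffI)
    fix E assume E: "E \<in> {E \<in> arcs (Yplus p). tail (Yplus p) E = w \<and> head (Yplus p) E = v}"
    then obtain e \<sigma>' where e: "e \<in> X_edges p" and \<sigma>': "\<sigma>' \<in> {1..<p}" and E_eq: "E = arc_orbit p e \<sigma>'"
      by (auto elim: arcs_YplusE)
    have "\<sigma>' = \<sigma> \<or> \<sigma>' + \<sigma> = p"
      using E tail_Yplus[OF \<sigma>'] \<sigma> \<sigma>' E_eq vert_orbit_eq_iff by simp
    then have "E = arc_orbit p e \<sigma>" by (auto simp: E_eq arc_orbit_def)
    then show "E \<in> (\<lambda>e. arc_orbit p e \<sigma>) ` ?good"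
      using E e head_Yplus[OF e \<sigma>(1)] \<tau> by auto
  next
    fix E assume "E \<in> (\<lambda>e. arc_orbit p e \<sigma>) ` ?good"
    then obtain e where e: "e \<in> ?good" and E: "E = arc_orbit p e \<sigma>" by blast
    then show "E \<in> {E \<in> arcs (Yplus p). tail (Yplus p) E = w \<and> head (Yplus p) E = v}"
      using \<sigma> \<tau> tail_Yplus head_Yplus by (force simp: arcs_Yplus)
  qed
  moreover have "inj_on (\<lambda>e. arc_orbit p e \<sigma>) ?good"
    by (auto simp: inj_on_def arc_orbit_def doubleton_eq_iff)
  ultimately show ?thesis
    using card_edges_into_orbit[OF \<sigma>(1) \<tau>(1)] \<sigma> \<tau> by (simp add: card_image)
qed

lemma card_verts_Yplus: "card (verts (Yplus p)) = (p - 1) div 2"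
proof -
  define h where "h = (p - 1) div 2"
  have p: "p = 2 * h + 1" using odd by (auto simp: h_def elim!: oddE)
  have "vert_orbit p ` {1..<p} = vert_orbit p ` {1..h}"
  proof
    show "vert_orbit p ` {1..<p} \<subseteq> vert_orbit p ` {1..h}"
    proof
      fix c assume "c \<in> vert_orbit p ` {1..<p}"
      then obtain \<sigma> where \<sigma>: "\<sigma> \<in> {1..<p}" and c: "c = vert_orbit p \<sigma>" by blast
      have "vert_orbit p (p - \<sigma>) = vert_orbit p \<sigma>" using \<sigma> by (auto simp: vert_orbit_def)
      then show "c \<in> vert_orbit p ` {1..h}"
        using \<sigma> c p by (cases "\<sigma> \<le> h") (auto intro!: image_eqI[of _ _ "p - \<sigma>"])
    qed
  qed (use p in auto)
  moreover have "inj_on (vert_orbit p) {1..h}"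
  proof (rule inj_onI)
    fix a b assume "a \<in> {1..h}" "b \<in> {1..h}" "vert_orbit p a = vert_orbit p b"
    then show "a = b" using vert_orbit_eq_iff[of a b] p by auto
  qed
  ultimately show ?thesis unfolding verts_Yplus h_def by (simp add: card_image)
qed

lemma I_plus_qJ_digraph_Yplus: "I_plus_qJ_digraph (Yplus p) p"
proof
  show "finite (verts (Yplus p))" by (simp add: verts_Yplus)
  show "finite (arcs (Yplus p))" by (simp add: arcs_Yplus finite_X_edges)
  show "verts (Yplus p) \<noteq> {}" using p_ge_3 by (simp add: verts_Yplus)
  show "p > 0" using p_ge_3 by simp
  fix E assume "E \<in> arcs (Yplus p)"
  then obtain e \<sigma> where e: "e \<in> X_edges p" and \<sigma>: "\<sigma> \<in> {1..<p}" and E: "E = arc_orbit p e \<sigma>"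
    by (rule arcs_YplusE)
  have "\<sigma> * alpha p e mod p \<in> {1..<p}" using mult_mod_in_units[OF \<sigma> alpha_in_units[OF e]] .
  then show "tail (Yplus p) E \<in> verts (Yplus p)" "head (Yplus p) E \<in> verts (Yplus p)"
    using \<sigma> unfolding E tail_Yplus[OF \<sigma>] head_Yplus[OF e \<sigma>] verts_Yplus by blast+
qed (fact card_arcs_between_Yplus)

end

theorem corollary5p5:
  fixes p :: nat
  assumes "prime p" and "odd p"
  shows "r_ord (Yplus p) = BF_rank (Yplus p)
    \<and> mval (Yplus p) = (-1) ^ ((p - 1) div 2) * of_nat ((p - 1) div 2)
    \<and> card (BF_tors (Yplus p)) = p
    \<and> gstar (Yplus p) = (-1) ^ ((p - 1) div 2) * int ((p - 1) div 2) * int p"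
proof -
  interpret odd_prime p using assms by unfold_locales
  interpret Y: I_plus_qJ_digraph "Yplus p" p by (rule I_plus_qJ_digraph_Yplus)
  have "p > 0" using p_ge_3 by simp
  then show ?thesis
    by (simp add: Y.r_ord_eq Y.BF_rank_eq Y.card_BF_tors Y.gstar_eq card_verts_Yplus mval_def)
qed

end
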